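(* Fix an ordinal $\beta\leq\omega_1$ and consider $\mathbb{S}(\beta)$, with $R_\alpha=\mathcal{O}^\alpha(\sim_e)$. For every $\alpha<\beta$, the restriction of $R_\alpha$ to $I\times(\alpha+1)$ (i.e. to pairs of points of $I\times(\alpha+1)$) is the identity relation, and $V\times\{\alpha\}\in\Sigma(R_\alpha)$, where $\Sigma=\mathcal{B}_V\otimes\mathcal{P}(\beta)$.
   Context: An LMP is $(S,\Sigma,\{\tau_a\}_{a\in L})$ with $L$ countable and Markov kernels $\tau_a$. $\Sigma(R)$ = $R$-closed members of $\Sigma$ ($x\in A$, $xRs\Rightarrow s\in A$); $\mathcal{R}(\Gamma)=\{(s,t):\forall A\in\Gamma\,(s\in A\iff t\in A)\}$; $\mathcal{R}^T(\Lambda)=\{(s,t):\forall a\,\forall E\in\Lambda\ \tau_a(s,E)=\tau_a(t,E)\}$; $\mathcal{O}(R)=\mathcal{R}^T(\Sigma(R))$, $\mathcal{O}^0(R)=R$, $\mathcal{O}^{\alpha+1}=\mathcal{O}\circ\mathcal{O}^\alpha$, $\mathcal{O}^\lambda(R)=\bigcap_{\alpha<\lambda}\mathcal{O}^\alpha(R)$. ${\sim_e}=\mathcal{R}(\sigma(\llbracket\mathcal{L}\rrbracket))$ where $\sigma(\llbracket\mathcal{L}\rrbracket)$ is generated by the denotations of formulas $\top\mid\phi\wedge\psi\mid\langle a\rangle_{>q}\phi$ ($q\in\mathbb{Q}\cap[0,1]$), $\llbracket\langle a\rangle_{>q}\phi\rrbracket=\{s:\tau_a(s,\llbracket\phi\rrbracket)>q\}$.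 The processes $\mathbb{S}(\beta)$: $I=(0,1)$, $\mathfrak{m}$ Lebesgue measure, $V\subseteq I$ Lebesgue nonmeasurable, $\mathcal{B}_V=\sigma(\mathcal{B}(I)\cup\{V\})$, and $\mathfrak{m}_0,\mathfrak{m}_1$ measures on $\mathcal{B}_V$ extending $\mathfrak{m}$ with $\mathfrak{m}_0(V)\neq\mathfrak{m}_1(V)$. Let $\{q_n\}_{n\in\omega}$ enumerate $\mathbb{Q}\cap I$. For ordinals $\eta$: $\alpha_n(0)=0$, $\alpha_n(\zeta+1)=\zeta$ for all $n$, and for limit $\lambda$, $(\alpha_n(\lambda))_{n\in\omega}$ is a fixed strictly increasing sequence of nonzero ordinals below $\lambda$ cofinal in $\lambda$. For an ordinal $\beta\leq\omega_1$, $\mathbb{S}(\beta)=(I\times\beta,\ \mathcal{B}_V\otimes\mathcal{P}(\beta),\ \{\tau_n\}_{n\in\omega})$ with $\tau_n((x,\eta),A)=x\cdot\mathfrak{m}_0(A_0)$ if $\eta=0$; $=\mathfrak{m}_0(A_{\alpha_n(\eta)})$ if $\eta>0$ and $x<q_n$; $=\mathfrak{m}_1(A_{\alpha_n(\eta)})$ if $\eta>0$ and $x\geq q_n$; here $A_\gamma=\{r:(r,\gamma)\in A\}$. These $\tau_n$ are Markov kernels, so $\mathbb{S}(\beta)$ is an LMP. *)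

theory Defs
  imports "HOL-Analysis.Analysis"
begin

text \<open>Ordinals are modelled as elements of a well-ordered type 'o; the ordinal
  beta is a downward closed set B of such elements.\<close>

definition Iunit :: "real set" where "Iunit = {0<..<1}"

definition BVsets :: "real set \<Rightarrow> real set set" where
  "BVsets V = sigma_sets Iunit (sets (restrict_space borel Iunit) \<union> {V})"

definition SigS :: "real set \<Rightarrow> 'o set \<Rightarrow> (real \<times> 'o) set set" where
  "SigS V B = sets (sigma Iunit (BVsets V) \<Otimes>\<^sub>M count_space B)"

definition ozero :: "'o::wellorder" where "ozero = (LEAST x. True)"

definition is_pred :: "'o::wellorder \<Rightarrow> 'o \<Rightarrow> bool" where
  "is_pred z a \<longleftrightarrow> z < a \<and> \<not> (\<exists>y. z < y \<and> y < a)"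

definition is_limit :: "'o::wellorder \<Rightarrow> bool" where
  "is_limit a \<longleftrightarrow> a \<noteq> ozero \<and> \<not> (\<exists>z. is_pred z a)"

definition sect :: "(real \<times> 'o) set \<Rightarrow> 'o \<Rightarrow> real set" where
  "sect A g = {r. (r, g) \<in> A}"

definition tauS :: "real measure \<Rightarrow> real measure \<Rightarrow> (nat \<Rightarrow> real) \<Rightarrow> (nat \<Rightarrow> 'o \<Rightarrow> 'o)
    \<Rightarrow> nat \<Rightarrow> real \<times> 'o::wellorder \<Rightarrow> (real \<times> 'o) set \<Rightarrow> real" where
  "tauS m0 m1 q al n s A = (case s of (x, eta) \<Rightarrow>
     if eta = ozero then x * measure m0 (sect A ozero)
     else if x < q n then measure m0 (sect A (al n eta))
     else measure m1 (sect A (al n eta)))"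

datatype form = FTop | FAnd form form | FDiam nat rat form

fun wf_form :: "form \<Rightarrow> bool" where
  "wf_form FTop = True"
| "wf_form (FAnd p r) = (wf_form p \<and> wf_form r)"
| "wf_form (FDiam a q p) = (0 \<le> q \<and> q \<le> 1 \<and> wf_form p)"

fun sem :: "(nat \<Rightarrow> 's \<Rightarrow> 's set \<Rightarrow> real) \<Rightarrow> 's set \<Rightarrow> form \<Rightarrow> 's set" where
  "sem t S FTop = S"
| "sem t S (FAnd p r) = sem t S p \<inter> sem t S r"
| "sem t S (FDiam a q p) = {s \<in> S. t a s (sem t S p) > real_of_rat q}"

definition RelG :: "'s set \<Rightarrow> 's set set \<Rightarrow> ('s \<times> 's) set" where
  "RelG S G = {(s, t). s \<in> S \<and> t \<in> S \<and> (\<forall>A\<in>G. s \<in> A \<longleftrightarrow> t \<in> A)}"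

definition RelT :: "'s set \<Rightarrow> (nat \<Rightarrow> 's \<Rightarrow> 's set \<Rightarrow> real) \<Rightarrow> 's set set \<Rightarrow> ('s \<times> 's) set" where
  "RelT S t L = {(s, u). s \<in> S \<and> u \<in> S \<and> (\<forall>a. \<forall>E\<in>L. t a s E = t a u E)}"

definition SigR :: "'s set set \<Rightarrow> ('s \<times> 's) set \<Rightarrow> 's set set" where
  "SigR Sig R = {A \<in> Sig. \<forall>x s. x \<in> A \<and> (x, s) \<in> R \<longrightarrow> s \<in> A}"

definition Oop :: "'s set \<Rightarrow> (nat \<Rightarrow> 's \<Rightarrow> 's set \<Rightarrow> real) \<Rightarrow> 's set set
    \<Rightarrow> ('s \<times> 's) set \<Rightarrow> ('s \<times> 's) set" where
  "Oop S t Sig R = RelT S t (SigR Sig R)"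

definition sim_e :: "'s set \<Rightarrow> (nat \<Rightarrow> 's \<Rightarrow> 's set \<Rightarrow> real) \<Rightarrow> ('s \<times> 's) set" where
  "sim_e S t = RelG S (sigma_sets S {sem t S p | p. wf_form p})"

definition Oiter :: "(('s \<times> 's) set \<Rightarrow> ('s \<times> 's) set) \<Rightarrow> ('s \<times> 's) set
    \<Rightarrow> 'o::wellorder \<Rightarrow> ('s \<times> 's) set" where
  "Oiter Of R0 = wfrec {(x, y). x < y} (\<lambda>f a.
     if a = ozero then R0
     else if (\<exists>z. is_pred z a) then Of (f (THE z. is_pred z a))
     else (\<Inter>z\<in>{z. z < a}. f z))"

end

theory Submission
  imports Defs
begin

(*
  By induction on \<alpha>, a point of I \<times> (\<alpha>+1) is R\<^sub>\<alpha>-related only to itself; hence every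
  measurable subset of I \<times> (\<alpha>+1), in particular V \<times> {\<alpha>}, is R\<^sub>\<alpha>-closed.
  At level 0, \<tau>_0 of the whole space is x at (x, 0) and 1 elsewhere, so the formulas
  <0>_{>r}\<top> recover x. At a successor \<zeta>+1 the sets I \<times> {\<gamma>} and V \<times> {\<gamma>} with \<gamma> \<le> \<zeta> are
  R\<^sub>\<zeta>-closed by induction, and \<tau>_n on them reads off \<alpha>_n(\<eta>) and the side of q_n on which x
  lies (because m0(V) \<noteq> m1(V)); the \<alpha>_n determine \<eta> and the dense q_n determine x.
  At a limit \<lambda>, a point (x, \<lambda>) is compared with points of level \<ge> \<lambda> through
  R\<^sub>\<lambda> \<subseteq> O(R\<^sub>w) with w = \<alpha>_n(\<lambda>), for every n.
*)

lemma ozero_le [simp]: "ozero \<le> (x::'o::wellorder)"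
  unfolding ozero_def by (rule Least_le) simp

lemma le_ozero_iff [simp]: "(x::'o::wellorder) \<le> ozero \<longleftrightarrow> x = ozero"
  using antisym ozero_le by blast

lemma is_pred_unique: "is_pred z a \<Longrightarrow> is_pred w a \<Longrightarrow> z = (w::'o::wellorder)"
  unfolding is_pred_def by (metis linorder_neqE)

lemma the_pred_eq: "is_pred z a \<Longrightarrow> (THE z. is_pred z a) = (z::'o::wellorder)"
  using is_pred_unique by blast

lemma is_pred_imp_less: "is_pred z a \<Longrightarrow> z < a"
  by (simp add: is_pred_def)

lemma is_pred_imp_nonzero: "is_pred z a \<Longrightarrow> a \<noteq> (ozero::'o::wellorder)"
  using is_pred_imp_less ozero_le leD by metis

lemma less_imp_le_pred: "is_pred z a \<Longrightarrow> y < a \<Longrightarrow> y \<le> (z::'o::wellorder)"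
  unfolding is_pred_def by (meson not_le)

lemma limit_has_succ_below:
  assumes "w < a" and "\<nexists>z. is_pred z (a::'o::wellorder)"
  shows "\<exists>v. is_pred w v \<and> v < a"
proof -
  define v where "v = (LEAST y. w < y)"
  have "w < v" unfolding v_def using assms(1) by (rule LeastI)
  then have "is_pred w v" unfolding is_pred_def v_def by (metis not_less_Least)
  moreover have "v \<le> a" unfolding v_def using assms(1) by (rule Least_le)
  ultimately show ?thesis using assms(2) by (metis order.not_eq_order_implies_strict)
qed

lemma Oiter_unfold:
  "Oiter Of R0 (a::'o::wellorder) =
    (if a = ozero then R0
     else if \<exists>z. is_pred z a then Of (Oiter Of R0 (THE z. is_pred z a))
     else \<Inter>z\<in>{z. z < a}. Oiter Of R0 z)"
proof -
  define H where "H = (\<lambda>f a. if a = ozero then R0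
     else if (\<exists>z. is_pred z a) then Of (f (THE z. is_pred z (a::'o)))
     else (\<Inter>z\<in>{z. z < a}. f z))"
  have Oiter_eq: "Oiter Of R0 = wfrec {(x, y). x < y} H"
    unfolding Oiter_def H_def ..
  have "Oiter Of R0 a = H (cut (Oiter Of R0) {(x, y). x < y} a) a"
    unfolding Oiter_eq by (rule wfrec[OF wf])
  also have "\<dots> = H (Oiter Of R0) a"
    unfolding H_def by (auto simp: cut_apply the_pred_eq is_pred_imp_less intro!: INF_cong)
  finally show ?thesis unfolding H_def .
qed

lemma Oiter_ozero: "Oiter Of R0 ozero = R0"
  by (subst Oiter_unfold) simp

lemma Oiter_pred: "is_pred z a \<Longrightarrow> Oiter Of R0 a = Of (Oiter Of R0 z)"
  by (subst Oiter_unfold) (auto simp: is_pred_imp_nonzero the_pred_eq)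

lemma Oiter_limit:
  "a \<noteq> ozero \<Longrightarrow> \<nexists>z. is_pred z a \<Longrightarrow> Oiter Of R0 a = (\<Inter>z\<in>{z. z < a}. Oiter Of R0 z)"
  by (subst Oiter_unfold) simp

lemma Oiter_induct [case_names ozero pred limit]:
  assumes "P ozero"
    and "\<And>z a. is_pred z a \<Longrightarrow> P z \<Longrightarrow> P a"
    and "\<And>a. a \<noteq> ozero \<Longrightarrow> \<nexists>z. is_pred z a \<Longrightarrow> (\<And>z. z < a \<Longrightarrow> P z) \<Longrightarrow> P a"
  shows "P (a::'o::wellorder)"
proof (induction a rule: less_induct)
  case (less a)
  then show ?case
    using assms is_pred_imp_less by (cases "a = ozero"; cases "\<exists>z. is_pred z a") blast+
qed

lemma sym_Oiter: "sym R0 \<Longrightarrow> (\<And>R. sym (Of R)) \<Longrightarrow> sym (Oiter Of R0 a)"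
  by (induction a rule: Oiter_induct) (simp_all add: Oiter_ozero Oiter_pred Oiter_limit sym_INTER)

lemma Id_on_subset_Oiter:
  "Id_on S \<subseteq> R0 \<Longrightarrow> (\<And>R. Id_on S \<subseteq> Of R) \<Longrightarrow> Id_on S \<subseteq> Oiter Of R0 a"
  by (induction a rule: Oiter_induct) (auto simp: Oiter_ozero Oiter_pred Oiter_limit)

lemma Oiter_subset:
  fixes a :: "'o::wellorder"
  assumes "R0 \<subseteq> S \<times> S" and "\<And>R. Of R \<subseteq> S \<times> S"
  shows "Oiter Of R0 a \<subseteq> S \<times> S"
proof (cases "a = ozero")
  case True
  then show ?thesis using assms(1) by (simp add: Oiter_ozero)
next
  case nonzero: False
  show ?thesis
  proof (cases "\<exists>z. is_pred z a")
    case True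
    then obtain z where "is_pred z a" ..
    then show ?thesis using assms(2) by (simp add: Oiter_pred)
  next
    case False
    have "ozero < a"
      using nonzero ozero_le[of a] by (rule order.not_eq_order_implies_strict[OF not_sym])
    then have "Oiter Of R0 a \<subseteq> Oiter Of R0 (ozero::'o)"
      unfolding Oiter_limit[OF nonzero False] by blast
    then show ?thesis using assms(1) by (simp add: Oiter_ozero)
  qed
qed

lemma Oiter_limit_subset_succ:
  assumes "a \<noteq> ozero" and "\<nexists>z. is_pred z a" and "w < a"
  shows "Oiter Of R0 a \<subseteq> Of (Oiter Of R0 w)"
proof -
  obtain v where "is_pred w v" "v < a"
    using limit_has_succ_below[OF assms(3,2)] by blast
  then have "Oiter Of R0 a \<subseteq> Oiter Of R0 v"
    unfolding Oiter_limit[OF assms(1,2)] by blast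
  then show ?thesis
    using Oiter_pred[OF \<open>is_pred w v\<close>, of Of R0] by simp
qed

lemma sym_RelG: "sym (RelG S G)"
  unfolding RelG_def sym_def by auto

lemma sym_RelT: "sym (RelT S t L)"
  unfolding RelT_def sym_def by auto

lemma Id_on_subset_RelG: "Id_on S \<subseteq> RelG S G"
  unfolding RelG_def by auto

lemma Id_on_subset_RelT: "Id_on S \<subseteq> RelT S t L"
  unfolding RelT_def by auto

lemma RelG_subset: "RelG S G \<subseteq> S \<times> S"
  unfolding RelG_def by auto

lemma RelT_subset: "RelT S t L \<subseteq> S \<times> S"
  unfolding RelT_def by auto

lemma sim_e_eq_tau_space:
  assumes rel: "(s, u) \<in> sim_e S t"
    and range: "t a s S \<in> {0..1}" "t a u S \<in> {0..1}"
  shows "t a s S = t a u S"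
proof -
  have not_less: "\<not> t a s' S < t a u' S"
    if rel': "(s', u') \<in> sim_e S t" and bounds: "0 \<le> t a s' S" "t a u' S \<le> 1" for s' u'
  proof
    assume "t a s' S < t a u' S"
    then obtain r :: rat where r: "t a s' S < of_rat r" "of_rat r < t a u' S"
      using of_rat_dense by blast
    with bounds have "(0::real) \<le> of_rat r" "(of_rat r::real) \<le> 1"
      by linarith+
    then have "wf_form (FDiam a r FTop)"
      by simp
    then have "sem t S (FDiam a r FTop) \<in> sigma_sets S {sem t S p | p. wf_form p}"
      by (blast intro: sigma_sets.Basic)
    then have "s' \<in> sem t S (FDiam a r FTop) \<longleftrightarrow> u' \<in> sem t S (FDiam a r FTop)"
      using rel' unfolding sim_e_def RelG_def by blast
    with r rel' show False
      unfolding sim_e_def RelG_def by auto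
  qed
  have "(u, s) \<in> sim_e S t"
    using rel sym_RelG unfolding sim_e_def by (rule symD[rotated])
  with not_less[OF rel] range show ?thesis
    by (metis atLeastAtMost_iff linorder_neqE not_less)
qed

definition isolated_on :: "'s set \<Rightarrow> ('s \<times> 's) set \<Rightarrow> bool" where
  "isolated_on X R \<longleftrightarrow> (\<forall>s\<in>X. \<forall>u. (s, u) \<in> R \<longrightarrow> u = s)"

lemma SigR_if_isolated_on: "E \<in> Sig \<Longrightarrow> E \<subseteq> X \<Longrightarrow> isolated_on X R \<Longrightarrow> E \<in> SigR Sig R"
  unfolding SigR_def isolated_on_def by blast

lemma Id_on_eq_if_isolated_on: "isolated_on X R \<Longrightarrow> Id_on X \<subseteq> R \<Longrightarrow> R \<inter> X \<times> X = Id_on X"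
  unfolding isolated_on_def by auto

lemma Iunit_in_restrict_borel: "Iunit \<in> sets (restrict_space borel Iunit)"
  by (simp add: Iunit_def sets_restrict_space_iff)

lemma emeasure_Iunit: "emeasure lborel Iunit = 1"
  by (simp add: Iunit_def)

lemma BVsets_subset_Pow: "V \<subseteq> Iunit \<Longrightarrow> BVsets V \<subseteq> Pow Iunit"
  unfolding BVsets_def
  by (intro subsetI PowI sigma_sets_into_sp[of _ Iunit]) (auto simp: sets_restrict_space)

lemma Iunit_in_BVsets: "Iunit \<in> BVsets V"
  unfolding BVsets_def by (rule sigma_sets_top)

lemma V_in_BVsets: "V \<in> BVsets V"
  unfolding BVsets_def by (blast intro: sigma_sets.Basic)

lemma Times_singleton_in_SigS:
  "V \<subseteq> Iunit \<Longrightarrow> A \<in> BVsets V \<Longrightarrow> w \<in> B \<Longrightarrow> A \<times> {w} \<in> SigS V B"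
  unfolding SigS_def
  by (rule pair_measureI) (auto simp: sets_measure_of BVsets_subset_Pow)

lemma measure_Iunit:
  assumes "\<And>A. A \<in> sets (restrict_space borel Iunit) \<Longrightarrow> emeasure m A = emeasure lborel A"
  shows "measure m Iunit = 1"
  using assms[OF Iunit_in_restrict_borel] by (simp add: measure_def emeasure_Iunit)

lemma emeasure_BVsets_finite:
  assumes "sets m = BVsets V" and "V \<subseteq> Iunit"
    and "\<And>A. A \<in> sets (restrict_space borel Iunit) \<Longrightarrow> emeasure m A = emeasure lborel A"
    and "A \<in> BVsets V"
  shows "emeasure m A \<noteq> \<infinity>"
proof -
  have "emeasure m A \<le> emeasure m Iunit"
    using assms(1,4) BVsets_subset_Pow[OF assms(2)] Iunit_in_BVsets by (intro emeasure_mono) auto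
  then show ?thesis
    using assms(3)[OF Iunit_in_restrict_borel] by (auto simp: emeasure_Iunit top_unique)
qed

lemma sect_Times_singleton: "sect (A \<times> {w}) g = (if g = w then A else {})"
  unfolding sect_def by auto

lemma sect_Times: "g \<in> B \<Longrightarrow> sect (A \<times> B) g = A"
  unfolding sect_def by auto

lemma tauS_ozero: "tauS m0 m1 q al n (x, ozero) E = x * measure m0 (sect E ozero)"
  by (simp add: tauS_def)

lemma tauS_nonzero:
  "e \<noteq> ozero \<Longrightarrow> tauS m0 m1 q al n (x, e) E = measure (if x < q n then m0 else m1) (sect E (al n e))"
  by (simp add: tauS_def)

locale S_beta =
  fixes B :: "'o::wellorder set"
    and V :: "real set"
    and m0 m1 :: "real measure"
    and q :: "nat \<Rightarrow> real"
    and al :: "nat \<Rightarrow> 'o \<Rightarrow> 'o"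
  assumes B_down: "\<And>x y. x \<in> B \<Longrightarrow> y \<le> x \<Longrightarrow> y \<in> B"
    and V_sub: "V \<subseteq> Iunit"
    and m0_sets: "sets m0 = BVsets V"
    and m1_sets: "sets m1 = BVsets V"
    and m0_ext: "\<And>A. A \<in> sets (restrict_space borel Iunit) \<Longrightarrow> emeasure m0 A = emeasure lborel A"
    and m1_ext: "\<And>A. A \<in> sets (restrict_space borel Iunit) \<Longrightarrow> emeasure m1 A = emeasure lborel A"
    and m01_V: "emeasure m0 V \<noteq> emeasure m1 V"
    and q_enum: "bij_betw q UNIV (\<rat> \<inter> Iunit)"
    and al_succ: "\<And>n z e. is_pred z e \<Longrightarrow> al n e = z"
    and al_lim_mono: "\<And>l. l \<in> B \<Longrightarrow> is_limit l \<Longrightarrow> strict_mono (\<lambda>n. al n l)"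
    and al_lim_bound: "\<And>l n. l \<in> B \<Longrightarrow> is_limit l \<Longrightarrow> ozero < al n l \<and> al n l < l"
    and al_lim_cofinal: "\<And>l z. l \<in> B \<Longrightarrow> is_limit l \<Longrightarrow> z < l \<Longrightarrow> \<exists>n. z < al n l"
begin

abbreviation "St \<equiv> Iunit \<times> B"
abbreviation "tau \<equiv> tauS m0 m1 q al"
abbreviation "Sig \<equiv> SigS V B"
abbreviation "Rel \<equiv> Oiter (Oop St tau Sig) (sim_e St tau)"
abbreviation "Xle a \<equiv> Iunit \<times> {z. z \<le> a}"

lemma al_less: "e \<in> B \<Longrightarrow> e \<noteq> ozero \<Longrightarrow> al n e < e"
  using al_succ is_pred_imp_less al_lim_bound unfolding is_limit_def by metis

lemma al_mem: "e \<in> B \<Longrightarrow> e \<noteq> ozero \<Longrightarrow> al n e \<in> B"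
  using B_down al_less less_imp_le by metis

lemma al_inj:
  assumes "e \<in> B" "f \<in> B" "e \<noteq> ozero" "f \<noteq> ozero" and same: "\<And>n. al n e = al n f"
  shows "e = f"
proof -
  have not_const: "al 0 g \<noteq> al 1 g" if "g \<in> B" "is_limit g" for g
    using strict_monoD[OF al_lim_mono[OF that], of 0 1] by simp
  consider "\<exists>z. is_pred z e" "\<exists>z. is_pred z f" | "\<exists>z. is_pred z e" "is_limit f"
    | "is_limit e" "\<exists>z. is_pred z f" | "is_limit e" "is_limit f"
    using assms(3,4) unfolding is_limit_def by blast
  then show ?thesis
  proof cases
    case 1
    then obtain z where "is_pred z e" "is_pred z f"
      using same[of 0] al_succ by metis
    then show ?thesis
      unfolding is_pred_def by (metis linorder_neqE)
  next
    case 2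
    then show ?thesis using same not_const[OF assms(2)] al_succ by metis
  next
    case 3
    then show ?thesis using same not_const[OF assms(1)] al_succ by metis
  next
    case 4
    have "\<not> g < h" if "g \<in> B" "h \<in> B" "is_limit g" "is_limit h" "\<And>n. al n g = al n h" for g h
      using al_lim_cofinal[OF that(2,4)] al_lim_bound[OF that(1,3)] that(5) by (metis order.asym)
    with 4 assms show ?thesis by (metis linorder_neqE)
  qed
qed

lemma eq_if_same_cuts:
  assumes "x \<in> Iunit" "y \<in> Iunit" and same: "\<And>n. x < q n \<longleftrightarrow> y < q n"
  shows "x = y"
proof -
  have "\<not> x < y" if "x \<in> Iunit" "y \<in> Iunit" "\<And>n. x < q n \<longleftrightarrow> y < q n" for x y
  proof
    assume "x < y"
    then obtain r :: rat where r: "x < of_rat r" "of_rat r < y"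
      using of_rat_dense by blast
    moreover have "0 < x" "y < 1"
      using that(1,2) by (auto simp: Iunit_def)
    ultimately have "(0::real) < of_rat r" "(of_rat r::real) < 1"
      by linarith+
    then have "of_rat r \<in> \<rat> \<inter> Iunit"
      by (simp add: Iunit_def)
    then obtain n where "q n = of_rat r"
      using bij_betw_imp_surj_on[OF q_enum] by (metis imageE)
    with r that(3)[of n] show False by simp
  qed
  with assms show ?thesis by (metis linorder_neqE)
qed

lemma measure_V_neq: "measure m0 V \<noteq> measure m1 V"
proof -
  have "emeasure m0 V \<noteq> \<infinity>" "emeasure m1 V \<noteq> \<infinity>"
    by (rule emeasure_BVsets_finite[OF m0_sets V_sub], fact m0_ext, fact V_in_BVsets)
      (rule emeasure_BVsets_finite[OF m1_sets V_sub], fact m1_ext, fact V_in_BVsets)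
  with m01_V show ?thesis
    using emeasure_eq_ennreal_measure[of m0 V] emeasure_eq_ennreal_measure[of m1 V] by auto
qed

lemma Rel_subset: "Rel a \<subseteq> St \<times> St"
  unfolding sim_e_def Oop_def by (intro Oiter_subset RelG_subset RelT_subset)

lemma sym_Rel: "sym (Rel a)"
  unfolding sim_e_def Oop_def by (intro sym_Oiter sym_RelG sym_RelT)

lemma Id_on_subset_Rel: "Id_on St \<subseteq> Rel a"
  unfolding sim_e_def Oop_def by (intro Id_on_subset_Oiter Id_on_subset_RelG Id_on_subset_RelT)

lemma ozero_mem: "b \<in> B \<Longrightarrow> ozero \<in> B"
  using B_down ozero_le by blast

lemma measure_Iunit_m01 [simp]: "measure m0 Iunit = 1" "measure m1 Iunit = 1"
  by (rule measure_Iunit, fact m0_ext) (rule measure_Iunit, fact m1_ext)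

lemma Oop_mem:
  "((x, e), (y, f)) \<in> Oop St tau Sig R' \<Longrightarrow> x \<in> Iunit \<and> e \<in> B \<and> y \<in> Iunit \<and> f \<in> B"
  unfolding Oop_def RelT_def by auto

lemma tau_eq_if_Oop:
  "((x, e), (y, f)) \<in> Oop St tau Sig R' \<Longrightarrow> E \<in> SigR Sig R' \<Longrightarrow> tau n (x, e) E = tau n (y, f) E"
  unfolding Oop_def RelT_def by blast

lemma sim_e_ozero:
  assumes "x \<in> Iunit" and rel: "((x, ozero), (y, f)) \<in> sim_e St tau"
  shows "(y, f) = (x, ozero)"
proof -
  have "y \<in> Iunit" "f \<in> B"
    using rel RelG_subset unfolding sim_e_def by blast+
  have "tau 0 (x, ozero) St = x"
    by (simp add: tauS_ozero sect_Times ozero_mem[OF \<open>f \<in> B\<close>])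
  moreover have "tau 0 (y, f) St = (if f = ozero then y else 1)"
    using \<open>f \<in> B\<close> by (simp add: tauS_ozero tauS_nonzero sect_Times al_mem ozero_mem)
  moreover have "tau 0 (x, ozero) St = tau 0 (y, f) St"
    using \<open>x \<in> Iunit\<close> \<open>y \<in> Iunit\<close> calculation
    by (intro sim_e_eq_tau_space[OF rel]) (auto simp: Iunit_def)
  ultimately show ?thesis
    using \<open>x \<in> Iunit\<close> by (auto simp: Iunit_def split: if_splits)
qed

lemma Oop_ozero_eq:
  assumes iso: "isolated_on (Xle z) R'" and "z \<in> B"
    and rel: "((x, e), (y, f)) \<in> Oop St tau Sig R'" and "e = ozero \<or> f = ozero"
  shows "(y, f) = (x, e)"
proof -
  let ?E = "Iunit \<times> {ozero}"
  have "?E \<in> SigR Sig R'"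
    by (rule SigR_if_isolated_on[OF Times_singleton_in_SigS[OF V_sub] _ iso])
      (auto intro: Iunit_in_BVsets ozero_mem[OF \<open>z \<in> B\<close>])
  then have "tau 0 (x, e) ?E = tau 0 (y, f) ?E"
    by (rule tau_eq_if_Oop[OF rel])
  moreover have "tau 0 (x', e') ?E = (if e' = ozero then x' else if al 0 e' = ozero then 1 else 0)" for x' e'
    by (cases "e' = ozero") (simp_all add: tauS_ozero tauS_nonzero sect_Times_singleton)
  ultimately show ?thesis
    using assms(4) Oop_mem[OF rel] by (auto simp: Iunit_def split: if_splits)
qed

lemma Oop_agree:
  assumes iso: "isolated_on (Xle z) R'" and rel: "((x, e), (y, f)) \<in> Oop St tau Sig R'"
    and "e \<noteq> ozero" "f \<noteq> ozero" "al n e \<le> z"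
  shows "al n f = al n e \<and> (y < q n \<longleftrightarrow> x < q n)"
proof -
  have "al n e \<in> B"
    using al_mem Oop_mem[OF rel] \<open>e \<noteq> ozero\<close> by blast
  have tau_eq: "tau n (x, e) (A \<times> {al n e}) = tau n (y, f) (A \<times> {al n e})" if "A \<in> BVsets V" for A
  proof (rule tau_eq_if_Oop[OF rel], rule SigR_if_isolated_on[OF _ _ iso])
    show "A \<times> {al n e} \<in> Sig"
      using Times_singleton_in_SigS[OF V_sub that \<open>al n e \<in> B\<close>] .
    show "A \<times> {al n e} \<subseteq> Xle z"
      using BVsets_subset_Pow[OF V_sub] that \<open>al n e \<le> z\<close> by auto
  qed
  have tau_rect: "tau n (x', e') (A \<times> {al n e}) =
      (if al n e' = al n e then measure (if x' < q n then m0 else m1) A else 0)" if "e' \<noteq> ozero" for x' e' A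
    using that by (simp add: tauS_nonzero sect_Times_singleton)
  have "al n f = al n e"
    using tau_eq[OF Iunit_in_BVsets] by (auto simp: tau_rect assms(3,4) split: if_splits)
  moreover have "measure (if x < q n then m0 else m1) V = measure (if y < q n then m0 else m1) V"
    using tau_eq[OF V_in_BVsets] by (simp add: tau_rect assms(3,4) \<open>al n f = al n e\<close>)
  ultimately show ?thesis
    using measure_V_neq by (auto split: if_splits)
qed

lemma Oop_below_eq:
  assumes "e \<noteq> ozero" "f \<noteq> ozero"
    and below: "\<And>n. \<exists>z. isolated_on (Xle z) (Rel z) \<and> al n e \<le> z \<and>
      ((x, e), (y, f)) \<in> Oop St tau Sig (Rel z)"
  shows "(y, f) = (x, e)"
proof -
  have agree: "al n f = al n e \<and> (y < q n \<longleftrightarrow> x < q n)" for n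
    using below[of n] Oop_agree assms(1,2) by blast
  have "x \<in> Iunit" "e \<in> B" "y \<in> Iunit" "f \<in> B"
    using below[of 0] Oop_mem by blast+
  then show ?thesis
    using al_inj[of f e] eq_if_same_cuts[of y x] agree assms(1,2) by simp
qed

lemma isolated_on_Rel_ozero: "isolated_on (Xle ozero) (Rel ozero)"
  unfolding isolated_on_def Oiter_ozero
proof (intro ballI allI impI)
  fix s u assume "s \<in> Xle ozero" and rel: "(s, u) \<in> sim_e St tau"
  then obtain x where "s = (x, ozero)" "x \<in> Iunit"
    by auto
  with rel show "u = s"
    using sim_e_ozero by (metis surj_pair)
qed

lemma isolated_on_Rel_pred:
  assumes pred: "is_pred z a" and "z \<in> B" and iso: "isolated_on (Xle z) (Rel z)"
  shows "isolated_on (Xle a) (Rel a)"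
  unfolding isolated_on_def
proof (intro ballI allI impI)
  fix s u assume "s \<in> Xle a" and rel_a: "(s, u) \<in> Rel a"
  obtain x e y f where s: "s = (x, e)" "e \<le> a" and u: "u = (y, f)"
    using \<open>s \<in> Xle a\<close> by (cases u) auto
  have rel: "((x, e), (y, f)) \<in> Oop St tau Sig (Rel z)"
    using rel_a s u Oiter_pred[OF pred, of "Oop St tau Sig" "sim_e St tau"] by simp
  show "u = s"
  proof (cases "e = ozero \<or> f = ozero")
    case True
    then show ?thesis using Oop_ozero_eq[OF iso \<open>z \<in> B\<close> rel] s u by simp
  next
    case False
    have "al n e \<le> z" for n
    proof (rule less_imp_le_pred[OF pred])
      show "al n e < a"
        using al_less[of e n] Oop_mem[OF rel] False \<open>e \<le> a\<close> by simp
    qed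
    then show ?thesis
      using Oop_below_eq[of e f x y] iso rel False s u by blast
  qed
qed

lemma isolated_on_Rel_limit:
  assumes "a \<in> B" and limit: "a \<noteq> ozero" "\<nexists>z. is_pred z a"
    and iso_below: "\<And>w. w < a \<Longrightarrow> isolated_on (Xle w) (Rel w)"
  shows "isolated_on (Xle a) (Rel a)"
  unfolding isolated_on_def
proof (intro ballI allI impI)
  fix s u assume "s \<in> Xle a" and rel: "(s, u) \<in> Rel a"
  obtain x e y f where s: "s = (x, e)" "x \<in> Iunit" "e \<le> a" and u: "u = (y, f)"
    using \<open>s \<in> Xle a\<close> by (cases u) auto
  have rel_below: "(s, u) \<in> Rel w" if "w < a" for w
    using rel that unfolding Oiter_limit[OF limit] by blast
  consider "e < a" | "f < a" | "e = a" "\<not> f < a"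
    using \<open>e \<le> a\<close> by fastforce
  then show "u = s"
  proof cases
    case 1
    with s u show ?thesis
      using iso_below[OF 1] rel_below[OF 1] unfolding isolated_on_def by auto
  next
    case 2
    have "(u, s) \<in> Rel f"
      using rel_below[OF 2] sym_Rel by (rule symD[rotated])
    with u show ?thesis
      using iso_below[OF 2] Rel_subset unfolding isolated_on_def by blast
  next
    case 3
    with limit(1) have "e \<noteq> ozero" "f \<noteq> ozero"
      using ozero_le[of a] by (auto simp: not_less)
    moreover have "al n e < a" for n
      using al_less \<open>e = a\<close> \<open>a \<in> B\<close> \<open>e \<noteq> ozero\<close> by blast
    moreover have "((x, e), (y, f)) \<in> Oop St tau Sig (Rel w)" if "w < a" for w
      using Oiter_limit_subset_succ[OF limit that] rel s u by blast
    ultimately show ?thesis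
      using Oop_below_eq[of e f x y] iso_below s u by blast
  qed
qed

lemma isolated_on_Rel: "a \<in> B \<Longrightarrow> isolated_on (Xle a) (Rel a)"
proof (induction a rule: Oiter_induct)
  case ozero
  show ?case by (rule isolated_on_Rel_ozero)
next
  case (pred z a)
  have "z \<in> B"
    using B_down[OF pred.prems] is_pred_imp_less[OF pred.hyps] by simp
  with pred show ?case
    by (blast intro: isolated_on_Rel_pred)
next
  case (limit a)
  then show ?case
    using B_down by (blast intro: isolated_on_Rel_limit less_imp_le)
qed

end

theorem lemma5p8:
  fixes B :: "'o::wellorder set"
    and V :: "real set"
    and m0 m1 :: "real measure"
    and q :: "nat \<Rightarrow> real"
    and al :: "nat \<Rightarrow> 'o \<Rightarrow> 'o"
  assumes B_down: "\<And>x y. x \<in> B \<Longrightarrow> y \<le> x \<Longrightarrow> y \<in> B"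
    and B_le_omega1: "\<And>x. x \<in> B \<Longrightarrow> countable {y. y < x}"
    and V_sub: "V \<subseteq> Iunit"
    and V_nonmeas: "V \<notin> sets lebesgue"
    and m0_space: "space m0 = Iunit" and m0_sets: "sets m0 = BVsets V"
    and m1_space: "space m1 = Iunit" and m1_sets: "sets m1 = BVsets V"
    and m0_ext: "\<And>A. A \<in> sets (restrict_space borel Iunit) \<Longrightarrow> emeasure m0 A = emeasure lborel A"
    and m1_ext: "\<And>A. A \<in> sets (restrict_space borel Iunit) \<Longrightarrow> emeasure m1 A = emeasure lborel A"
    and m01_V: "emeasure m0 V \<noteq> emeasure m1 V"
    and q_enum: "bij_betw q UNIV (\<rat> \<inter> Iunit)"
    and al_zero: "\<And>n. al n ozero = ozero"
    and al_succ: "\<And>n z e. is_pred z e \<Longrightarrow> al n e = z"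
    and al_lim_mono: "\<And>l. l \<in> B \<Longrightarrow> is_limit l \<Longrightarrow> strict_mono (\<lambda>n. al n l)"
    and al_lim_bound: "\<And>l n. l \<in> B \<Longrightarrow> is_limit l \<Longrightarrow> ozero < al n l \<and> al n l < l"
    and al_lim_cofinal: "\<And>l z. l \<in> B \<Longrightarrow> is_limit l \<Longrightarrow> z < l \<Longrightarrow> \<exists>n. z < al n l"
  shows "\<forall>a\<in>B.
     (let S = Iunit \<times> B; t = tauS m0 m1 q al; Sig = SigS V B;
          R = Oiter (Oop S t Sig) (sim_e S t) a;
          X = Iunit \<times> {z. z \<le> a}
      in R \<inter> (X \<times> X) = Id_on X \<and> V \<times> {a} \<in> SigR Sig R)"
proof -
  interpret S_beta B V m0 m1 q al
    using B_down V_sub m0_sets m1_sets m0_ext m1_ext m01_V q_enum al_succ al_lim_mono al_lim_bound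
      al_lim_cofinal by unfold_locales
  have "Rel a \<inter> Xle a \<times> Xle a = Id_on (Xle a) \<and> V \<times> {a} \<in> SigR Sig (Rel a)" if "a \<in> B" for a
  proof
    have "Id_on (Xle a) \<subseteq> Id_on St"
      using B_down[OF that] by auto
    then show "Rel a \<inter> Xle a \<times> Xle a = Id_on (Xle a)"
      using Id_on_subset_Rel by (intro Id_on_eq_if_isolated_on[OF isolated_on_Rel[OF that]]) blast
    show "V \<times> {a} \<in> SigR Sig (Rel a)"
      by (rule SigR_if_isolated_on[OF Times_singleton_in_SigS[OF V_sub V_in_BVsets that] _
            isolated_on_Rel[OF that]])
        (use V_sub in auto)
  qed
  then show ?thesis
    by (simp add: Let_def)
qed

end
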